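(* Let $\alpha>0$, $\beta,\eta,\kappa\in\mathbb{R}$, $\rho>0$, $p\geq 1$ and $q$ with $\frac1p+\frac1q=1$, and $0\le a<x$. Let $f,g$ be two positive functions on $[0,\infty)$ with $f,g\in X^{p}_{c}(a,x)$ (for some $c\in\mathbb{R}$), such that ${}^{\rho}\mathcal{I}^{\alpha,\beta}_{a+,\eta,\kappa}f(x)<\infty$ and ${}^{\rho}\mathcal{I}^{\alpha,\beta}_{a+,\eta,\kappa}g(x)<\infty$. If there are real numbers $m,M>0$ with $0<m\leq \frac{f(t)}{g(t)}\leq M$ for all $t\in[a,x]$, then $$\left({}^{\rho}\mathcal{I}^{\alpha,\beta}_{a+,\eta,\kappa}f(x)\right)^{1/p}\left({}^{\rho}\mathcal{I}^{\alpha,\beta}_{a+,\eta,\kappa}g(x)\right)^{1/q}\leq\left(\frac{M}{m}\right)^{\frac{1}{pq}}\,{}^{\rho}\mathcal{I}^{\alpha,\beta}_{a+,\eta,\kappa}\big(f^{1/p}g^{1/q}\big)(x).$$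
   Context: For $c\in\mathbb{R}$ and $1\le p<\infty$, $X^{p}_{c}(a,b)$ denotes the space of Lebesgue measurable functions $f$ on $(a,b)$ with $\left(\int_a^b |t^{c}f(t)|^{p}\,\frac{dt}{t}\right)^{1/p}<\infty$. For $\alpha>0$, $\beta,\eta,\kappa\in\mathbb{R}$, $\rho>0$, $0\le a<x$, and a function $\varphi$, the generalized (Katugampola) fractional integral is $${}^{\rho}\mathcal{I}^{\alpha,\beta}_{a+,\eta,\kappa}\varphi(x)=\frac{\rho^{1-\beta}x^{\kappa}}{\Gamma(\alpha)}\int_{a}^{x}\frac{\tau^{\rho(\eta+1)-1}}{(x^{\rho}-\tau^{\rho})^{1-\alpha}}\varphi(\tau)\,d\tau,$$ whenever the integral exists. ${}^{\rho}\mathcal{I}^{\alpha,\beta}_{a+,\eta,\kappa}(f^{1/p}g^{1/q})(x)$ means the operator applied to $\tau\mapsto f(\tau)^{1/p}g(\tau)^{1/q}$, evaluated at $x$. *)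

theory Defs
  imports "HOL-Analysis.Analysis"
begin

definition Xpc :: "real \<Rightarrow> real \<Rightarrow> real \<Rightarrow> real \<Rightarrow> (real \<Rightarrow> real) \<Rightarrow> bool" where
  "Xpc c p a b f \<longleftrightarrow>
     set_borel_measurable lborel {a<..<b} f \<and>
     set_integrable lborel {a<..<b} (\<lambda>t. \<bar>t powr c * f t\<bar> powr p / t)"

definition katu_kernel :: "real \<Rightarrow> real \<Rightarrow> real \<Rightarrow> real \<Rightarrow> real \<Rightarrow> real" where
  "katu_kernel \<rho> \<alpha> \<eta> x \<tau> =
     \<tau> powr (\<rho> * (\<eta> + 1) - 1) / (x powr \<rho> - \<tau> powr \<rho>) powr (1 - \<alpha>)"

definition katu_integrable ::
  "real \<Rightarrow> real \<Rightarrow> real \<Rightarrow> real \<Rightarrow> (real \<Rightarrow> real) \<Rightarrow> real \<Rightarrow> bool" where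
  "katu_integrable \<rho> \<alpha> \<eta> a \<phi> x \<longleftrightarrow>
     set_integrable lborel {a<..<x} (\<lambda>\<tau>. katu_kernel \<rho> \<alpha> \<eta> x \<tau> * \<phi> \<tau>)"

definition katu_int ::
  "real \<Rightarrow> real \<Rightarrow> real \<Rightarrow> real \<Rightarrow> real \<Rightarrow> real \<Rightarrow> (real \<Rightarrow> real) \<Rightarrow> real \<Rightarrow> real" where
  "katu_int \<rho> \<alpha> \<beta> \<eta> \<kappa> a \<phi> x =
     \<rho> powr (1 - \<beta>) * x powr \<kappa> / Gamma \<alpha> *
     (LINT \<tau>:{a<..<x}|lborel. katu_kernel \<rho> \<alpha> \<eta> x \<tau> * \<phi> \<tau>)"

end

theory Submission
  imports Defs
begin

text \<open>Write u = 1/p, v = 1/q and h = f^u g^v. The ratio bounds m g \<le> f \<le> M g give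
  pointwise f \<le> M^v h and m^u g \<le> h. The fractional integral I is a positive linear
  functional, so I f \<le> M^v I h and m^u I g \<le> I h, whence
  (I f)^u (I g)^v \<le> (M^v I h)^u (m^-u I h)^v = (M/m)^(uv) I h.\<close>

lemma powr_conjugate_split:
  fixes y u v :: real
  assumes "0 \<le> y" "u + v = 1"
  shows "y powr u * y powr v = y"
  using assms by (simp flip: powr_add)

lemma le_powr_geometric_mean:
  fixes f g M u v :: real
  assumes "0 < f" "0 < g" "f \<le> M * g" "0 \<le> v" "u + v = 1"
  shows "f \<le> M powr v * (f powr u * g powr v)"
proof -
  have "0 < M" using assms(1-3) by (smt (verit) mult_nonpos_nonneg)
  have "f powr v \<le> (M * g) powr v"
    using assms by (intro powr_mono2) auto
  also have "\<dots> = M powr v * g powr v"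
    using \<open>0 < M\<close> assms(2) by (simp add: powr_mult)
  finally have "f powr u * f powr v \<le> f powr u * (M powr v * g powr v)"
    by (simp add: mult_left_mono)
  then show ?thesis
    using powr_conjugate_split[of f u v] assms by (simp add: ac_simps)
qed

lemma powr_geometric_mean_ge:
  fixes f g m u v :: real
  assumes "0 < m" "0 < g" "m * g \<le> f" "0 \<le> u" "u + v = 1"
  shows "m powr u * g \<le> f powr u * g powr v"
proof -
  have "m powr u * g powr u = (m * g) powr u"
    using assms by (simp add: powr_mult)
  also have "\<dots> \<le> f powr u"
    using assms by (intro powr_mono2) auto
  finally have "m powr u * (g powr u * g powr v) \<le> f powr u * g powr v"
    by (simp add: mult_right_mono mult.assoc[symmetric])
  then show ?thesis
    using powr_conjugate_split[of g u v] assms by simp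
qed

lemma powr_conjugate_product_le:
  fixes A B D m M u v :: real
  assumes "0 \<le> A" "0 \<le> B" "0 < m" "0 < M" "0 \<le> u" "0 \<le> v" "u + v = 1"
    and upper: "A \<le> M powr v * D" and lower: "m powr u * B \<le> D"
  shows "A powr u * B powr v \<le> (M / m) powr (u * v) * D"
proof -
  have "0 \<le> D"
    using lower assms(2) by (smt (verit) mult_nonneg_nonneg powr_ge_zero)
  have A_le: "A powr u \<le> M powr (u * v) * D powr u"
  proof -
    have "A powr u \<le> (M powr v * D) powr u"
      using upper assms by (intro powr_mono2) auto
    also have "\<dots> = M powr (u * v) * D powr u"
      using \<open>0 \<le> D\<close> by (simp add: powr_mult powr_powr mult.commute)
    finally show ?thesis .
  qed
  have B_le: "m powr (u * v) * B powr v \<le> D powr v"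
  proof -
    have "m powr (u * v) * B powr v = (m powr u * B) powr v"
      using assms(2) by (simp add: powr_mult powr_powr)
    also have "\<dots> \<le> D powr v"
      using lower assms by (intro powr_mono2) auto
    finally show ?thesis .
  qed
  have "A powr u * B powr v \<le> M powr (u * v) * D powr u * B powr v"
    using A_le by (simp add: mult_right_mono)
  also have "\<dots> \<le> M powr (u * v) * D powr u * (D powr v / m powr (u * v))"
    using B_le assms(3) by (intro mult_left_mono) (auto simp: field_simps)
  also have "\<dots> = (M / m) powr (u * v) * (D powr u * D powr v)"
    using assms(3,4) by (simp add: powr_divide)
  also have "D powr u * D powr v = D"
    using powr_conjugate_split \<open>0 \<le> D\<close> assms(7) by blast
  finally show ?thesis .
qed

lemma katu_kernel_nonneg: "0 \<le> katu_kernel \<rho> \<alpha> \<eta> x \<tau>"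
  unfolding katu_kernel_def by simp

lemma katu_integrable_cmult:
  "katu_integrable \<rho> \<alpha> \<eta> a \<phi> x \<Longrightarrow> katu_integrable \<rho> \<alpha> \<eta> a (\<lambda>\<tau>. c * \<phi> \<tau>) x"
  unfolding katu_integrable_def
  using set_integrable_mult_right[of c lborel "{a<..<x}" "\<lambda>\<tau>. katu_kernel \<rho> \<alpha> \<eta> x \<tau> * \<phi> \<tau>"]
  by (simp add: ac_simps)

lemma katu_int_cmult:
  "katu_int \<rho> \<alpha> \<beta> \<eta> \<kappa> a (\<lambda>\<tau>. c * \<phi> \<tau>) x = c * katu_int \<rho> \<alpha> \<beta> \<eta> \<kappa> a \<phi> x"
  unfolding katu_int_def by (simp add: mult.left_commute)

lemma katu_int_mono:
  assumes "0 < \<alpha>"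
    and "katu_integrable \<rho> \<alpha> \<eta> a \<phi> x" "katu_integrable \<rho> \<alpha> \<eta> a \<psi> x"
    and "\<And>\<tau>. \<tau> \<in> {a<..<x} \<Longrightarrow> \<phi> \<tau> \<le> \<psi> \<tau>"
  shows "katu_int \<rho> \<alpha> \<beta> \<eta> \<kappa> a \<phi> x \<le> katu_int \<rho> \<alpha> \<beta> \<eta> \<kappa> a \<psi> x"
proof -
  have factor_nonneg: "0 \<le> \<rho> powr (1 - \<beta>) * x powr \<kappa> / Gamma \<alpha>"
    using Gamma_real_pos[OF assms(1)] by simp
  have integral_le: "(LINT \<tau>:{a<..<x}|lborel. katu_kernel \<rho> \<alpha> \<eta> x \<tau> * \<phi> \<tau>)
      \<le> (LINT \<tau>:{a<..<x}|lborel. katu_kernel \<rho> \<alpha> \<eta> x \<tau> * \<psi> \<tau>)"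
    using assms(2-4) unfolding katu_integrable_def
    by (intro set_integral_mono mult_left_mono katu_kernel_nonneg)
  show ?thesis
    unfolding katu_int_def by (rule mult_left_mono[OF integral_le factor_nonneg])
qed

lemma katu_int_nonneg:
  assumes "0 < \<alpha>" "katu_integrable \<rho> \<alpha> \<eta> a \<phi> x"
    and "\<And>\<tau>. \<tau> \<in> {a<..<x} \<Longrightarrow> 0 \<le> \<phi> \<tau>"
  shows "0 \<le> katu_int \<rho> \<alpha> \<beta> \<eta> \<kappa> a \<phi> x"
proof -
  have "katu_int \<rho> \<alpha> \<beta> \<eta> \<kappa> a (\<lambda>_. 0) x \<le> katu_int \<rho> \<alpha> \<beta> \<eta> \<kappa> a \<phi> x"
    using assms by (intro katu_int_mono) (auto simp: katu_integrable_def set_integrable_def)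
  then show ?thesis
    by (simp add: katu_int_def)
qed

text \<open>Measurability comes from K f^u g^v = (K f)^u (K g)^v for K \<ge> 0, and integrability
  from Young's inequality f^u g^v \<le> u f + v g.\<close>

lemma katu_integrable_geometric_mean:
  fixes u v :: real
  assumes "katu_integrable \<rho> \<alpha> \<eta> a f x" "katu_integrable \<rho> \<alpha> \<eta> a g x"
    and pos: "\<And>\<tau>. \<tau> \<in> {a<..<x} \<Longrightarrow> 0 < f \<tau> \<and> 0 < g \<tau>"
    and "0 \<le> u" "0 \<le> v" "u + v = 1"
  shows "katu_integrable \<rho> \<alpha> \<eta> a (\<lambda>\<tau>. f \<tau> powr u * g \<tau> powr v) x"
proof -
  define S where "S = {a<..<x}"
  define K where "K = katu_kernel \<rho> \<alpha> \<eta> x"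
  have K_nonneg: "0 \<le> K \<tau>" for \<tau>
    unfolding K_def by (rule katu_kernel_nonneg)
  have int_f: "set_integrable lborel S (\<lambda>\<tau>. K \<tau> * f \<tau>)"
    and int_g: "set_integrable lborel S (\<lambda>\<tau>. K \<tau> * g \<tau>)"
    using assms(1,2) unfolding katu_integrable_def K_def S_def by auto
  have split: "indicator S \<tau> * (K \<tau> * (f \<tau> powr u * g \<tau> powr v))
      = (indicator S \<tau> * (K \<tau> * f \<tau>)) powr u * (indicator S \<tau> * (K \<tau> * g \<tau>)) powr v" for \<tau>
  proof (cases "\<tau> \<in> S")
    case True
    with pos have "0 < f \<tau>" "0 < g \<tau>" unfolding S_def by auto
    then have "(K \<tau> * f \<tau>) powr u * (K \<tau> * g \<tau>) powr v
        = (K \<tau> powr u * K \<tau> powr v) * (f \<tau> powr u * g \<tau> powr v)"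
      using K_nonneg[of \<tau>] by (simp add: powr_mult ac_simps)
    with True show ?thesis
      using powr_conjugate_split[OF K_nonneg assms(6)] by simp
  qed (use assms(4,5,6) in \<open>cases "u = 0"; simp\<close>)
  have measurable: "set_borel_measurable lborel S (\<lambda>\<tau>. K \<tau> * (f \<tau> powr u * g \<tau> powr v))"
    using int_f int_g unfolding set_borel_measurable_def set_integrable_def
    by (simp add: split borel_measurable_integrable)
  have dominant: "set_integrable lborel S (\<lambda>\<tau>. u * (K \<tau> * f \<tau>) + v * (K \<tau> * g \<tau>))"
    using int_f int_g by (intro set_integral_add) auto
  have dominated: "norm (K \<tau> * (f \<tau> powr u * g \<tau> powr v))
      \<le> norm (u * (K \<tau> * f \<tau>) + v * (K \<tau> * g \<tau>))" if "\<tau> \<in> S" for \<tau>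
  proof -
    from pos that have "0 < f \<tau>" "0 < g \<tau>" unfolding S_def by auto
    then have "K \<tau> * (f \<tau> powr u * g \<tau> powr v) \<le> K \<tau> * (u * f \<tau> + v * g \<tau>)"
      using Youngs_inequality_0 assms(4-6) K_nonneg by (intro mult_left_mono) auto
    then show ?thesis
      using \<open>0 < f \<tau>\<close> \<open>0 < g \<tau>\<close> K_nonneg[of \<tau>] assms(4,5)
      by (simp add: algebra_simps)
  qed
  have "set_integrable lborel S (\<lambda>\<tau>. K \<tau> * (f \<tau> powr u * g \<tau> powr v))"
    by (intro set_integrable_bound[OF dominant measurable] AE_I2 impI dominated)
  then show ?thesis
    unfolding katu_integrable_def K_def S_def .
qed

theorem theorem10:
  fixes \<alpha> \<beta> \<eta> \<kappa> \<rho> p q a x c m M :: real and f g :: "real \<Rightarrow> real"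
  assumes "\<alpha> > 0" "\<rho> > 0" "p \<ge> 1" "1 / p + 1 / q = 1"
    and "0 \<le> a" "a < x"
    and "\<And>t. t \<ge> 0 \<Longrightarrow> f t > 0" "\<And>t. t \<ge> 0 \<Longrightarrow> g t > 0"
    and "Xpc c p a x f" "Xpc c p a x g"
    and "katu_integrable \<rho> \<alpha> \<eta> a f x" "katu_integrable \<rho> \<alpha> \<eta> a g x"
    and "m > 0" "M > 0"
    and "\<And>t. t \<in> {a..x} \<Longrightarrow> m \<le> f t / g t \<and> f t / g t \<le> M"
  shows "(katu_int \<rho> \<alpha> \<beta> \<eta> \<kappa> a f x) powr (1 / p) * (katu_int \<rho> \<alpha> \<beta> \<eta> \<kappa> a g x) powr (1 / q)
         \<le> (M / m) powr (1 / (p * q)) *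
           katu_int \<rho> \<alpha> \<beta> \<eta> \<kappa> a (\<lambda>\<tau>. f \<tau> powr (1 / p) * g \<tau> powr (1 / q)) x"
proof -
  define I where "I = (\<lambda>\<phi>. katu_int \<rho> \<alpha> \<beta> \<eta> \<kappa> a \<phi> x)"
  define h where "h = (\<lambda>\<tau>. f \<tau> powr (1 / p) * g \<tau> powr (1 / q))"
  have u: "0 \<le> 1 / p" and "1 / p \<le> 1"
    using assms(3) by auto
  with assms(4) have v: "0 \<le> 1 / q"
    by linarith
  have pos: "0 < f \<tau> \<and> 0 < g \<tau>" and ratio: "m * g \<tau> \<le> f \<tau> \<and> f \<tau> \<le> M * g \<tau>"
    if "\<tau> \<in> {a<..<x}" for \<tau>
    using that assms(5,7,8) assms(15)[of \<tau>] by (auto simp: field_simps)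
  have int_h: "katu_integrable \<rho> \<alpha> \<eta> a h x"
    unfolding h_def using assms(11,12) pos u v assms(4) by (rule katu_integrable_geometric_mean)
  have "I f \<le> I (\<lambda>\<tau>. M powr (1 / q) * h \<tau>)"
    unfolding I_def using assms(1,11) int_h pos ratio v assms(4)
    by (intro katu_int_mono katu_integrable_cmult) (auto simp: h_def intro!: le_powr_geometric_mean)
  moreover have "I (\<lambda>\<tau>. m powr (1 / p) * g \<tau>) \<le> I h"
    unfolding I_def using assms(1,12,13) int_h pos ratio u assms(4)
    by (intro katu_int_mono katu_integrable_cmult) (auto simp: h_def intro!: powr_geometric_mean_ge)
  moreover have "0 \<le> I f" "0 \<le> I g"
    unfolding I_def using assms(1,11,12) by (auto intro!: katu_int_nonneg dest!: pos)
  ultimately have "I f powr (1 / p) * I g powr (1 / q) \<le> (M / m) powr (1 / p * (1 / q)) * I h"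
    using assms(4,13,14) u v
    by (intro powr_conjugate_product_le) (auto simp: I_def katu_int_cmult)
  then show ?thesis
    by (simp add: I_def h_def)
qed

end
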